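(* Let $1<\chi\le\rho$. The strategy driven by a $(\rho,\chi)$-bidding profile is $\rho$-robust and $\chi$-consistent.
   Context: Online bidding with target $T>0$ and prediction normalized to $1$: a bidder submits increasing positive bids until one is $\ge T$; the cost is the sum of bids up to and including the first bid $\ge T$. A (randomized) strategy $B$ with expected cost $\mathrm{cost}_B(T)$ is $\chi$-consistent if $\mathrm{cost}_B(1)\le\chi$ and $\rho$-robust if $\mathrm{cost}_B(T)\le\rho T$ for all $T>0$. Given $1<\chi\le\rho$, a $(\rho,\chi)$-bidding profile is a non-decreasing, left-continuous $G:\mathbb{R}\to(0,\infty)$ with (offset) $G(x)<1$ for $x<0$ and $G(x)\ge1$ for $x>0$; (robustness) $\int_{-\infty}^{x+1}G(t)\,\mathrm{d} t\le\rho G(x)$ for all $x\in\mathbb{R}$; (consistency) $\int_{-\infty}^1 G(t)\,\mathrm{d} t\le\chi$. The strategy driven by $G$ is the random bid sequence $(G(n+U))_{n\in\mathbb{Z}}$ with a single shared $U\sim\mathrm{Unif}(0,1]$; on target $T$ its cost is $\sum_{n\le n_*}G(n+U)$ where $n_*=\min\{n:G(n+U)\ge T\}$. *)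

theory Defs
  imports "HOL-Analysis.Analysis"
begin

definition bidding_profile :: "real \<Rightarrow> real \<Rightarrow> (real \<Rightarrow> real) \<Rightarrow> bool" where
  "bidding_profile rho chi G \<longleftrightarrow>
     mono G \<and>
     (\<forall>x. continuous (at_left x) G) \<and>
     (\<forall>x. 0 < G x) \<and>
     (\<forall>x<0. G x < 1) \<and> (\<forall>x>0. 1 \<le> G x) \<and>
     (\<forall>x. (\<integral>\<^sup>+ t \<in> {..x+1}. ennreal (G t) \<partial>lborel) \<le> ennreal (rho * G x)) \<and>
     (\<integral>\<^sup>+ t \<in> {..1}. ennreal (G t) \<partial>lborel) \<le> ennreal chi"

definition first_index :: "(real \<Rightarrow> real) \<Rightarrow> real \<Rightarrow> real \<Rightarrow> int" where
  "first_index G T u = Inf {n::int. T \<le> G (real_of_int n + u)}"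

definition profile_cost_at :: "(real \<Rightarrow> real) \<Rightarrow> real \<Rightarrow> real \<Rightarrow> ennreal" where
  "profile_cost_at G T u =
     (\<integral>\<^sup>+ n. indicator {..first_index G T u} n * ennreal (G (real_of_int n + u)) \<partial>count_space UNIV)"

text \<open>Expected cost with a shared \<open>U \<sim> Unif(0,1]\<close>.\<close>
definition profile_cost :: "(real \<Rightarrow> real) \<Rightarrow> real \<Rightarrow> ennreal" where
  "profile_cost G T = (\<integral>\<^sup>+ u \<in> {0<..1}. profile_cost_at G T u \<partial>lborel)"

definition robust_strategy :: "real \<Rightarrow> (real \<Rightarrow> ennreal) \<Rightarrow> bool" where
  "robust_strategy rho cost \<longleftrightarrow> (\<forall>T>0. cost T \<le> ennreal (rho * T))"

definition consistent_strategy :: "real \<Rightarrow> (real \<Rightarrow> ennreal) \<Rightarrow> bool" where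
  "consistent_strategy chi cost \<longleftrightarrow> cost 1 \<le> ennreal chi"

end

theory Submission imports Defs begin

text \<open>For a fixed shift \<open>u\<close>, the bids \<open>G (n + u)\<close> with \<open>n \<le> n\<^sub>*\<close> are samples of \<open>G\<close> at points of
  spacing 1 that do not exceed \<open>a + 1\<close>, where \<open>a\<close> is the point at which the monotone profile
  crosses the target \<open>T\<close>. Averaging over \<open>u \<in> (0,1]\<close> turns this sum into
  \<open>\<integral>\<^bsub>-\<infinity>\<^esub>\<^bsup>a+1\<^esup> G\<close>, which robustness bounds by \<open>\<rho> G a\<close>, and \<open>G a \<le> T\<close> by left-continuity.
  For \<open>T = 1\<close> the offset condition allows \<open>a = 0\<close>, and the bound becomes the consistency integral.\<close>

lemma indicator_unit_interval_diff_of_int: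
  "indicator {0<..1} (t - real_of_int n) = (indicator {\<lceil>t\<rceil> - 1} n :: ennreal)"
proof -
  have "0 < t - real_of_int n \<and> t - real_of_int n \<le> 1 \<longleftrightarrow> n = \<lceil>t\<rceil> - 1"
    by (auto simp: ceiling_eq_iff) linarith+
  then show ?thesis
    by (simp add: indicator_def)
qed

lemma nn_integral_sum_int_translates:
  fixes H :: "real \<Rightarrow> ennreal"
  assumes H[measurable]: "H \<in> borel_measurable borel"
  shows "(\<integral>\<^sup>+u \<in> {0<..1}. (\<integral>\<^sup>+n. H (real_of_int n + u) \<partial>count_space UNIV) \<partial>lborel)
       = (\<integral>\<^sup>+t. H t \<partial>lborel)"
proof -
  interpret P: pair_sigma_finite "count_space (UNIV::int set)" lborel
    by (intro pair_sigma_finite.intro sigma_finite_measure_count_space_countable)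
       (auto intro: lborel.sigma_finite_measure_axioms)
  have translate: "(\<integral>\<^sup>+u. H (real_of_int n + u) * indicator {0<..1} u \<partial>lborel)
      = (\<integral>\<^sup>+t. indicator {0<..1} (t - real_of_int n) * H t \<partial>lborel)" for n :: int
    using nn_integral_real_affine[of "\<lambda>t. indicator {0<..1} (t - real_of_int n) * H t" 1 "real_of_int n"]
    by (simp add: mult.commute)
  have "(\<integral>\<^sup>+u \<in> {0<..1}. (\<integral>\<^sup>+n. H (real_of_int n + u) \<partial>count_space UNIV) \<partial>lborel)
      = (\<integral>\<^sup>+u. (\<integral>\<^sup>+n. H (real_of_int n + u) * indicator {0<..1} u \<partial>count_space UNIV) \<partial>lborel)"
    by (intro nn_integral_cong) (simp add: nn_integral_multc)
  also have "\<dots> = (\<integral>\<^sup>+n. (\<integral>\<^sup>+u. H (real_of_int n + u) * indicator {0<..1} u \<partial>lborel) \<partial>count_space UNIV)"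
    by (intro P.Fubini' measurable_pair_measure_countable1) auto
  also have "\<dots> = (\<integral>\<^sup>+n. (\<integral>\<^sup>+t. indicator {0<..1} (t - real_of_int n) * H t \<partial>lborel) \<partial>count_space UNIV)"
    by (simp only: translate)
  also have "\<dots> = (\<integral>\<^sup>+t. (\<integral>\<^sup>+n. indicator {0<..1} (t - real_of_int n) * H t \<partial>count_space UNIV) \<partial>lborel)"
    by (intro P.Fubini' [symmetric] measurable_pair_measure_countable1) auto
  also have "\<dots> = (\<integral>\<^sup>+t. H t \<partial>lborel)"
    by (simp add: indicator_unit_interval_diff_of_int nn_integral_multc)
  finally show ?thesis .
qed

lemma first_index_le:
  fixes G :: "real \<Rightarrow> real"
  assumes "mono G" and "G x\<^sub>0 < T" and above: "\<And>x. a < x \<Longrightarrow> T \<le> G x"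
  shows "real_of_int (first_index G T u) + u \<le> a + 1"
proof -
  define S where "S = {n::int. T \<le> G (real_of_int n + u)}"
  define n\<^sub>0 where "n\<^sub>0 = \<lfloor>a - u\<rfloor> + 1"
  have "n\<^sub>0 \<in> S"
    unfolding S_def n\<^sub>0_def by (intro CollectI above) linarith
  moreover have "bdd_below S"
  proof (rule bdd_belowI)
    fix n assume "n \<in> S"
    then have "x\<^sub>0 < real_of_int n + u"
      using assms(1,2) by (auto simp: S_def dest: monoD[of G "real_of_int n + u" x\<^sub>0])
    then show "\<lfloor>x\<^sub>0 - u\<rfloor> \<le> n" by linarith
  qed
  ultimately have "first_index G T u \<le> n\<^sub>0"
    unfolding first_index_def S_def[symmetric] by (rule cInf_lower)
  then show ?thesis
    unfolding n\<^sub>0_def by linarith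
qed

lemma profile_cost_at_le:
  fixes G :: "real \<Rightarrow> real"
  assumes "mono G" and "G x\<^sub>0 < T" and "\<And>x. a < x \<Longrightarrow> T \<le> G x"
  shows "profile_cost_at G T u
    \<le> (\<integral>\<^sup>+n. ennreal (G (real_of_int n + u)) * indicator {..a+1} (real_of_int n + u) \<partial>count_space UNIV)"
  unfolding profile_cost_at_def
proof (rule nn_integral_mono)
  fix n :: int
  have "real_of_int (first_index G T u) + u \<le> a + 1"
    by (rule first_index_le) (fact assms)+
  then have "n \<le> first_index G T u \<Longrightarrow> real_of_int n + u \<le> a + 1"
    by linarith
  then show "indicator {..first_index G T u} n * ennreal (G (real_of_int n + u))
      \<le> ennreal (G (real_of_int n + u)) * indicator {..a+1} (real_of_int n + u)"
    by (auto simp: indicator_def)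
qed

lemma profile_cost_le_set_nn_integral:
  fixes G :: "real \<Rightarrow> real"
  assumes "mono G" and "G x\<^sub>0 < T" and "\<And>x. a < x \<Longrightarrow> T \<le> G x"
  shows "profile_cost G T \<le> (\<integral>\<^sup>+t \<in> {..a+1}. ennreal (G t) \<partial>lborel)"
proof -
  have [measurable]: "G \<in> borel_measurable borel"
    using borel_measurable_mono[OF assms(1)] .
  have "profile_cost G T \<le> (\<integral>\<^sup>+u \<in> {0<..1}. (\<integral>\<^sup>+n. ennreal (G (real_of_int n + u))
      * indicator {..a+1} (real_of_int n + u) \<partial>count_space UNIV) \<partial>lborel)"
    unfolding profile_cost_def
    by (intro nn_integral_mono mult_right_mono profile_cost_at_le[OF assms]) auto
  also have "\<dots> = (\<integral>\<^sup>+t \<in> {..a+1}. ennreal (G t) \<partial>lborel)"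
    by (rule nn_integral_sum_int_translates) measurable
  finally show ?thesis .
qed

lemma set_nn_integral_ge_const_interval:
  fixes G :: "real \<Rightarrow> real"
  assumes "{b<..c} \<subseteq> A" and "\<And>t. t \<in> {b<..c} \<Longrightarrow> d \<le> G t" and "b \<le> c" and "0 \<le> d"
  shows "ennreal (d * (c - b)) \<le> (\<integral>\<^sup>+t \<in> A. ennreal (G t) \<partial>lborel)"
proof -
  have "ennreal (d * (c - b)) = (\<integral>\<^sup>+t. ennreal d * indicator {b<..c} t \<partial>lborel)"
    using assms by (simp add: nn_integral_cmult_indicator ennreal_mult)
  also have "\<dots> \<le> (\<integral>\<^sup>+t \<in> A. ennreal (G t) \<partial>lborel)"
    using assms by (intro nn_integral_mono) (auto simp: indicator_def intro: ennreal_leI)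
  finally show ?thesis .
qed

lemma ex_less_if_set_nn_integral_le:
  fixes G :: "real \<Rightarrow> real"
  assumes bound: "(\<integral>\<^sup>+t \<in> {..c}. ennreal (G t) \<partial>lborel) \<le> ennreal C" and "0 \<le> C" and "0 < T"
  shows "\<exists>x. G x < T"
proof (rule ccontr)
  assume "\<not> (\<exists>x. G x < T)"
  then have "ennreal (T * (c - (c - (C + 1) / T))) \<le> (\<integral>\<^sup>+t \<in> {..c}. ennreal (G t) \<partial>lborel)"
    using assms by (intro set_nn_integral_ge_const_interval) (auto simp: not_less)
  also note bound
  finally show False
    using assms(2,3) by simp
qed

lemma mono_left_continuous_crossing:
  fixes G :: "real \<Rightarrow> real"
  assumes "mono G" and "\<And>x. continuous (at_left x) G" and "G x\<^sub>0 < T" and "T \<le> G x\<^sub>1"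
  obtains a where "G a \<le> T" and "\<And>x. a < x \<Longrightarrow> T \<le> G x"
proof
  define S where "S = {x. T \<le> G x}"
  have "S \<noteq> {}"
    using assms(4) by (auto simp: S_def)
  moreover have bdd: "bdd_below S"
  proof (rule bdd_belowI)
    fix x assume "x \<in> S"
    then show "x\<^sub>0 \<le> x"
      using assms(1,3) monoD[of G x x\<^sub>0] by (force simp: S_def)
  qed
  ultimately show "T \<le> G x" if "Inf S < x" for x
  proof -
    obtain y where "T \<le> G y" and "y < x"
      using \<open>S \<noteq> {}\<close> bdd \<open>Inf S < x\<close> by (auto simp: cInf_less_iff S_def)
    then show ?thesis
      using monoD[OF assms(1), of y x] by simp
  qed
  have below: "G x \<le> T" if "x < Inf S" for x
    using that cInf_lower[OF _ bdd, of x] by (force simp: S_def)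
  show "G (Inf S) \<le> T"
  proof (rule tendsto_upperbound)
    show "(G \<longlongrightarrow> G (Inf S)) (at_left (Inf S))"
      using assms(2) by (simp add: continuous_within)
    show "\<forall>\<^sub>F x in at_left (Inf S). G x \<le> T"
      using below by (auto simp: eventually_at_left_field intro: exI[of _ "Inf S - 1"])
  qed simp
qed

lemma bidding_profile_ge:
  assumes "bidding_profile rho chi G" and "0 < rho" and "0 \<le> x"
  shows "x + 1 \<le> rho * G x"
proof -
  have "ennreal (1 * (x + 1 - 0)) \<le> (\<integral>\<^sup>+t \<in> {..x+1}. ennreal (G t) \<partial>lborel)"
    using assms by (intro set_nn_integral_ge_const_interval) (auto simp: bidding_profile_def)
  also have "\<dots> \<le> ennreal (rho * G x)"
    using assms(1) by (simp add: bidding_profile_def)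
  finally have "ennreal (x + 1) \<le> ennreal (rho * G x)"
    by (simp only: mult_1 diff_zero)
  moreover have "0 \<le> rho * G x"
    using assms by (auto simp: bidding_profile_def intro: mult_nonneg_nonneg less_imp_le)
  ultimately show ?thesis
    using ennreal_le_iff by blast
qed

lemma bidding_profile_crossing:
  assumes profile: "bidding_profile rho chi G" and "0 < rho" and "0 \<le> chi" and "0 < T"
  obtains x\<^sub>0 a where "G x\<^sub>0 < T" and "G a \<le> T" and "\<And>x. a < x \<Longrightarrow> T \<le> G x"
proof -
  obtain x\<^sub>0 where "G x\<^sub>0 < T"
    using ex_less_if_set_nn_integral_le[of G 1 chi T] profile assms(3,4)
    by (auto simp: bidding_profile_def)
  moreover have "T \<le> G (rho * T)"
  proof -
    have "rho * T + 1 \<le> rho * G (rho * T)"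
      using assms(2,4) by (intro bidding_profile_ge[OF profile]) auto
    then show ?thesis
      using assms(2) mult_le_cancel_left_pos[of rho T "G (rho * T)"] by linarith
  qed
  ultimately show ?thesis
    using mono_left_continuous_crossing[of G x\<^sub>0 T "rho * T"] profile that
    by (auto simp: bidding_profile_def)
qed

theorem corollary1:
  fixes rho chi :: real and G :: "real \<Rightarrow> real"
  assumes "1 < chi" and "chi \<le> rho" and "bidding_profile rho chi G"
  shows "robust_strategy rho (profile_cost G) \<and> consistent_strategy chi (profile_cost G)"
proof
  note profile = assms(3)[unfolded bidding_profile_def]
  show "consistent_strategy chi (profile_cost G)"
    using profile_cost_le_set_nn_integral[of G "-1" 1 0] profile
    unfolding consistent_strategy_def by (auto intro: order_trans)
  have "profile_cost G T \<le> ennreal (rho * T)" if "0 < T" for T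
  proof -
    obtain x\<^sub>0 a where "G x\<^sub>0 < T" and "G a \<le> T" and "\<And>x. a < x \<Longrightarrow> T \<le> G x"
      using bidding_profile_crossing[OF assms(3)] assms(1,2) \<open>0 < T\<close> by auto
    then have "profile_cost G T \<le> (\<integral>\<^sup>+t \<in> {..a+1}. ennreal (G t) \<partial>lborel)"
      using profile by (intro profile_cost_le_set_nn_integral) auto
    also have "\<dots> \<le> ennreal (rho * G a)"
      using profile by blast
    also have "\<dots> \<le> ennreal (rho * T)"
      using \<open>G a \<le> T\<close> assms(1,2) by (intro ennreal_leI mult_left_mono) auto
    finally show ?thesis .
  qed
  then show "robust_strategy rho (profile_cost G)"
    unfolding robust_strategy_def by blast
qed

end
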